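(* Let $r\in[0,\infty)$ satisfy $\mathbb{E}_P[e^{rX_1}]<\infty$, let $\xi\in\mathcal{R}_+(D)$, and let $Q^r$, $\{Q^r_\theta\}_{\theta\in D}$ and the $P_\Theta$-null set $L_{\ast\ast}$ be as described in the context. Then for every $\theta\notin L_{\ast\ast}$, \[ \kappa_\theta'(r)=\frac{\mathbb{E}_{Q^r_\theta}[X_1]}{\mathbb{E}_{Q^r_\theta}[W_1]}-c(\theta), \] where $\kappa_\theta'$ denotes the derivative of $r\mapsto\kappa_\theta(r)$.
   Context: Let $(\Omega,\Sigma,P)$ be a probability space, $d\in\mathbb{N}$, $D\subseteq\mathbb{R}^d$ a Borel set, and $\Theta$ a random vector on $\Omega$ with values in $D$ and distribution $P_\Theta$. Let $N=\{N_t\}_{t\ge0}$ be a counting process (values in $\mathbb{N}_0$, $N_0=0$, right-continuous paths, jumps of size one, $N_t\to\infty$), with arrival times $T_n$ ($T_0=0$), interarrival times $W_n=T_n-T_{n-1}$, and let $X=(X_n)_{n\in\mathbb{N}}$ be positive random variables; put $S_t=\sum_{k=1}^{N_t}X_k$ ($S_0=0$). Standing assumptions on $P$: $X$ is $P$-i.i.d. and $P$-independent of $N$; the sequence $W$ is $P$-conditionally independent given $\sigma(\Theta)$ and, for every $n$, the conditional distribution of $W_n$ given $\Theta$ equals $\mathbf{K}(\Theta)$ $P$-a.s., where $\{\mathbf{K}(\theta)\}_{\theta\in D}$ is a measurably parametrized family of probability distributions on $(0,\infty)$ (i.e. $S$ is a compound mixed renewal process); (a1) $W$ and $X$ are $P$-conditionally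 independent given $\Theta$; (a2) $\Theta$ and $X$ are $P$-independent. $\{P_\theta\}_{\theta\in D}$ is a regular conditional probability of $P$ over $P_\Theta$ consistent with $\Theta$: $\theta\mapsto P_\theta(E)$ is Borel, $\int P_\theta(E)\,P_\Theta(d\theta)=P(E)$ for all $E\in\Sigma$, and for each Borel $B$, $P_\theta(\Theta^{-1}(B))=1$ for $P_\Theta$-a.e. $\theta\in B$. There is a $P_\Theta$-null set $L_P$ such that for $\theta\notin L_P$, under $P_\theta$ the $W_n$ are i.i.d. with law $\mathbf{K}(\theta)$, the $X_n$ are i.i.d. with law $P_{X_1}$, and $W,X$ are independent. $\mathcal{F}_t=\sigma(\sigma(S_s:s\le t)\cup\sigma(\Theta))$. $c:D\to(0,\infty)$ is Borel measurable (premium rate). $M_{X_1}$ is the moment generating function of $X_1$ under $P$ and $(M_\theta)_{W_1}$ that of $W_1$ under $P_\theta$. For $r\ge0$ with $\mathbb{E}_P[e^{rX_1}]<\infty$ and $\theta\notin L_P$, $\kappa_\theta(r)$ is the unique real solution $\kappa$ of $M_{X_1}(r)\,(M_\theta)_{W_1}(-\kappa-c(\theta)r)=1$. $\mathcal{R}_+(D)$ is the class of Borel $\xi:D\to\mathbb{R}$ with $P_\Theta(\{\xi>0\})=1$ and $\mathbb{E}_P[\xi(\Theta)]=1$. For such $r$ and $\xi$ there are a probability measure $Q^r$ on $\Sigma$ (satisfying (a1), (a2), with $Q^r\restriction\mathcal{F}_t\sim P\restriction\mathcal{F}_t$ for all $t$, and $S$ a compound mixed renewal process under $Q^r$), a $P_\Theta$-null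 Borel set $L_{\ast\ast}\supseteq L_P$, and a regular conditional probability $\{Q^r_\theta\}_{\theta\in D}$ of $Q^r$ over $Q^r_\Theta$ consistent with $\Theta$, where $Q^r_\Theta(d\theta)=\xi(\theta)P_\Theta(d\theta)$, such that for every $\theta\notin L_{\ast\ast}$: $Q^r_\theta\restriction\mathcal{F}_t\sim P_\theta\restriction\mathcal{F}_t$ for all $t\ge0$, and under $Q^r_\theta$ the $W_n$ are i.i.d. with law $\Lambda_r(\theta)(dw)=e^{-(\kappa_\theta(r)+c(\theta)r)w}\mathbf{K}(\theta)(dw)/\int_{(0,\infty)}e^{-(\kappa_\theta(r)+c(\theta)r)v}\mathbf{K}(\theta)(dv)$, the $X_n$ are i.i.d. with law $e^{rx}P_{X_1}(dx)/\mathbb{E}_P[e^{rX_1}]$, and $W$ and $X$ are independent (so $S$ is a $Q^r_\theta$-compound renewal process). *)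

theory Defs
  imports "HOL-Probability.Probability"
begin

definition mgf :: "'a measure \<Rightarrow> ('a \<Rightarrow> real) \<Rightarrow> real \<Rightarrow> real" where
  "mgf M Y t = (\<integral>\<omega>. exp (t * Y \<omega>) \<partial>M)"

definition kappa ::
  "'a measure \<Rightarrow> 'a measure \<Rightarrow> ('a \<Rightarrow> real) \<Rightarrow> ('a \<Rightarrow> real) \<Rightarrow> real \<Rightarrow> real \<Rightarrow> real" where
  "kappa P P\<theta> X1 W1 c\<theta> r =
     (THE k. mgf P X1 r * mgf P\<theta> W1 (- k - c\<theta> * r) = 1)"

definition exp_tilt :: "real measure \<Rightarrow> real \<Rightarrow> real measure" where
  "exp_tilt \<mu> a = density \<mu> (\<lambda>x. ennreal (exp (a * x) / (\<integral>y. exp (a * y) \<partial>\<mu>)))"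

end

theory Submission
  imports Defs
begin

(*
  Write M_X and M_W for the moment generating functions of X_1 under P and of W_1 under P_theta.
  As W_1 > 0, M_W is continuous and strictly increasing on ]-oo, 0] with range ]0, 1], and
  M_X(r) >= 1, so kappa_theta(r) = - u(r) - c(theta) r, where u(r) <= 0 is the unique solution of
  M_W(u) = 1 / M_X(r). Implicit differentiation gives u'(r) = - M_X'(r) / (M_X(r)^2 M_W'(u(r))),
  and under the exponential tilts defining Q_theta one has E[X_1] = M_X'(r) / M_X(r) and
  E[W_1] = M_W'(u(r)) / M_W(u(r)) = M_W'(u(r)) M_X(r). The one degenerate case is u(r) = 0 with
  W_1 not integrable under P_theta: M_W then has infinite left slope at 0, so u'(r) = 0, in
  agreement with the convention that a non-integrable function has integral 0.
*)

lemma abs_exp_diff_quotient_le: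
  fixes x t t0 :: real
  assumes "0 \<le> x"
  shows "\<bar>(exp (t * x) - exp (t0 * x)) / (t - t0)\<bar> \<le> x * exp (max t t0 * x)"
proof -
  have "\<bar>exp (b * x) - exp (a * x)\<bar> \<le> (b - a) * (x * exp (b * x))" if "a \<le> b" for a b
  proof -
    have "exp (b * x) * (1 - (b - a) * x) \<le> exp (b * x) * exp ((a - b) * x)"
      using exp_ge_add_one_self[of "(a - b) * x"] by (intro mult_left_mono) (auto simp: algebra_simps)
    moreover have "exp (a * x) \<le> exp (b * x)"
      using that assms by (simp add: mult_right_mono)
    ultimately show ?thesis
      by (simp add: mult_exp_exp algebra_simps)
  qed
  from this[of t t0] this[of t0 t] assms show ?thesis
    by (cases "t \<le> t0") (auto simp: divide_le_eq max_def abs_minus_commute mult_ac)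
qed

lemma integral_dominated_convergence_at_within:
  fixes s :: "'b::first_countable_topology \<Rightarrow> 'a \<Rightarrow> real"
  assumes "f \<in> borel_measurable M" "\<And>t. s t \<in> borel_measurable M" "integrable M w"
    and lim: "AE x in M. ((\<lambda>t. s t x) \<longlongrightarrow> f x) (at t0 within S)"
    and bound: "\<forall>\<^sub>F t in at t0 within S. AE x in M. norm (s t x) \<le> w x"
  shows "((\<lambda>t. integral\<^sup>L M (s t)) \<longlongrightarrow> integral\<^sup>L M f) (at t0 within S)"
  unfolding tendsto_at_iff_sequentially comp_def
proof (intro allI impI)
  fix T :: "nat \<Rightarrow> 'b" assume "\<forall>i. T i \<in> S - {t0}" "T \<longlonglongrightarrow> t0"
  then have T: "filterlim T (at t0 within S) sequentially"
    by (auto simp: filterlim_at)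
  from filterlim_iff[THEN iffD1, OF this, rule_format, OF bound]
  obtain N where N: "\<And>n. N \<le> n \<Longrightarrow> AE x in M. norm (s (T n) x) \<le> w x"
    by (auto simp: eventually_sequentially)
  show "(\<lambda>n. integral\<^sup>L M (s (T n))) \<longlonglongrightarrow> integral\<^sup>L M f"
  proof (rule LIMSEQ_offset, rule integral_dominated_convergence)
    show "AE x in M. norm (s (T (n + N)) x) \<le> w x" for n
      by (rule N) auto
    show "AE x in M. (\<lambda>n. s (T (n + N)) x) \<longlonglongrightarrow> f x"
      using lim
    proof eventually_elim
      fix x assume "((\<lambda>t. s t x) \<longlongrightarrow> f x) (at t0 within S)"
      then show "(\<lambda>n. s (T (n + N)) x) \<longlonglongrightarrow> f x"
        by (intro LIMSEQ_ignore_initial_segment filterlim_compose[OF _ T])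
    qed
  qed (use assms in auto)
qed

lemma min_mult_exp_le_exp_diff_quotient:
  fixes x b t :: real
  assumes "0 \<le> x" "0 \<le> b" "t < 0"
  shows "min x b * exp (t * b) \<le> (exp (t * x) - 1) / t"
proof -
  define m where "m = min x b"
  have m: "0 \<le> m" "m \<le> x" "m \<le> b"
    using assms by (auto simp: m_def)
  have "m * exp (t * b) \<le> m * exp (t * m)"
    using m assms by (intro mult_left_mono) auto
  also have "- t * m * exp (t * m) \<le> 1 - exp (t * m)"
    using exp_ge_add_one_self[of "- t * m"] by (simp add: exp_minus field_simps)
  then have "m * exp (t * m) \<le> (exp (t * m) - 1) / t"
    using assms by (simp add: field_simps)
  also have "\<dots> \<le> (exp (t * x) - 1) / t"
    using m assms by (intro divide_right_mono_neg) (auto simp: mult_left_mono_neg)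
  finally show ?thesis
    by (simp add: m_def)
qed

lemma mult_exp_mult_mono:
  fixes a b y :: real
  assumes "a \<le> b" "0 \<le> y"
  shows "y * exp (a * y) \<le> y * exp (b * y)"
  using assms by (intro mult_left_mono) (auto intro: mult_right_mono)

lemma tendsto_of_strict_mono_on_comp:
  fixes u v F :: "real \<Rightarrow> real"
  assumes mono: "strict_mono_on {..b} F"
    and u: "\<And>s. s \<in> I \<Longrightarrow> u s \<le> b" and eq: "\<And>s. s \<in> I \<Longrightarrow> F (u s) = v s"
    and v: "(v \<longlongrightarrow> v r) (at r within I)" and "r \<in> I"
  shows "(u \<longlongrightarrow> u r) (at r within I)"
proof (rule order_tendstoI)
  have I: "\<forall>\<^sub>F s in at r within I. s \<in> I"
    by (simp add: eventually_at_filter)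
  have above_iff: "a < u s \<longleftrightarrow> F a < v s" and below_iff: "u s < a \<longleftrightarrow> v s < F a"
    if "s \<in> I" "a \<le> b" for a s
    using strict_mono_on_less[OF mono, of a "u s"] strict_mono_on_less[OF mono, of "u s" a]
      u[OF that(1)] eq[OF that(1)] that(2) by simp_all
  fix a
  show "\<forall>\<^sub>F s in at r within I. a < u s" if "a < u r"
  proof -
    have "a \<le> b"
      using that u[OF \<open>r \<in> I\<close>] by simp
    with that have "F a < v r"
      using above_iff[OF \<open>r \<in> I\<close>] by simp
    from order_tendstoD(1)[OF v this] I show ?thesis
      by eventually_elim (simp add: above_iff \<open>a \<le> b\<close>)
  qed
  show "\<forall>\<^sub>F s in at r within I. u s < a" if "u r < a"
  proof (cases "a \<le> b")
    case True
    with that have "v r < F a"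
      using below_iff[OF \<open>r \<in> I\<close>] by simp
    from order_tendstoD(2)[OF v this] I show ?thesis
      by eventually_elim (simp add: below_iff True)
  next
    case False
    from I show ?thesis
    proof eventually_elim
      case (elim s)
      show ?case
        using u[OF elim] False by simp
    qed
  qed
qed

text \<open>Here \<open>\<beta>\<close> plays the role of \<open>1 / F'(u r)\<close>; it may be \<open>0\<close> when \<open>F\<close> has infinite slope at \<open>u r\<close>.\<close>
lemma has_real_derivative_implicit:
  fixes u v F :: "real \<Rightarrow> real"
  assumes eq: "\<And>s. s \<in> I \<Longrightarrow> F (u s) = v s"
    and u: "\<And>s. s \<in> I \<Longrightarrow> u s \<in> T"
    and v_inj: "\<And>s. s \<in> I \<Longrightarrow> s \<noteq> r \<Longrightarrow> v s \<noteq> v r"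
    and u_cont: "(u \<longlongrightarrow> u r) (at r within I)"
    and F_slope: "((\<lambda>y. (y - u r) / (F y - F (u r))) \<longlongrightarrow> \<beta>) (at (u r) within T)"
    and v_deriv: "(v has_real_derivative v') (at r within I)"
    and "r \<in> I"
  shows "(u has_real_derivative v' * \<beta>) (at r within I)"
  unfolding has_field_derivative_iff
proof -
  have u_ne: "u s \<noteq> u r" if "s \<in> I" "s \<noteq> r" for s
    using v_inj[OF that] eq[OF that(1)] eq[OF \<open>r \<in> I\<close>] by metis
  have "\<forall>\<^sub>F s in at r within I. u s \<in> T \<and> u s \<noteq> u r"
    unfolding eventually_at_filter by (intro always_eventually allI impI) (simp add: u u_ne)
  with u_cont have "filterlim u (at (u r) within T) (at r within I)"
    by (simp add: filterlim_at)
  with F_slope have "((\<lambda>s. (u s - u r) / (F (u s) - F (u r))) \<longlongrightarrow> \<beta>) (at r within I)"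
    by (rule filterlim_compose)
  with v_deriv have lim: "((\<lambda>s. (v s - v r) / (s - r) * ((u s - u r) / (F (u s) - F (u r)))) \<longlongrightarrow> v' * \<beta>)
      (at r within I)"
    unfolding has_field_derivative_iff by (rule tendsto_mult)
  have "\<forall>\<^sub>F s in at r within I.
      (v s - v r) / (s - r) * ((u s - u r) / (F (u s) - F (u r))) = (u s - u r) / (s - r)"
    unfolding eventually_at_filter
  proof (intro always_eventually allI impI)
    fix s assume "s \<noteq> r" "s \<in> I"
    then have "v s - v r \<noteq> 0"
      using v_inj by simp
    then show "(v s - v r) / (s - r) * ((u s - u r) / (F (u s) - F (u r))) = (u s - u r) / (s - r)"
      using eq[OF \<open>s \<in> I\<close>] eq[OF \<open>r \<in> I\<close>] by simp
  qed
  from tendsto_cong[OF this] lim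
  show "((\<lambda>s. (u s - u r) / (s - r)) \<longlongrightarrow> v' * \<beta>) (at r within I)"
    by simp
qed

locale positive_random_variable = prob_space M for M :: "'a measure" +
  fixes Y :: "'a \<Rightarrow> real"
  assumes measurable_Y [measurable]: "Y \<in> borel_measurable M"
    and Y_pos: "\<And>x. x \<in> space M \<Longrightarrow> 0 < Y x"
begin

lemma Y_nonneg: "x \<in> space M \<Longrightarrow> 0 \<le> Y x"
  using Y_pos less_imp_le by blast

lemma integrable_exp_nonpos: "t \<le> 0 \<Longrightarrow> integrable M (\<lambda>x. exp (t * Y x))"
  by (intro integrable_const_bound[where B=1] AE_I2) (auto simp: mult_nonpos_nonneg Y_nonneg)

lemma integrable_mult_exp_less:
  assumes "integrable M (\<lambda>x. exp (s * Y x))" "t < s"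
  shows "integrable M (\<lambda>x. Y x * exp (t * Y x))"
proof (rule Bochner_Integration.integrable_bound[OF integrable_divide_zero[OF assms(1), of "s - t"]])
  show "AE x in M. norm (Y x * exp (t * Y x)) \<le> norm (exp (s * Y x) / (s - t))"
  proof (rule AE_I2)
    fix x assume "x \<in> space M"
    then have "0 < Y x" by (rule Y_pos)
    have "(s - t) * Y x \<le> exp ((s - t) * Y x)"
      using exp_ge_add_one_self[of "(s - t) * Y x"] by linarith
    then have "(s - t) * Y x * exp (t * Y x) \<le> exp ((s - t) * Y x) * exp (t * Y x)"
      by (rule mult_right_mono) simp
    also have "\<dots> = exp (s * Y x)"
      by (simp add: mult_exp_exp algebra_simps)
    finally show "norm (Y x * exp (t * Y x)) \<le> norm (exp (s * Y x) / (s - t))"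
      using \<open>0 < Y x\<close> assms(2) by (simp add: field_simps)
  qed
qed simp

lemma mgf_0 [simp]: "mgf M Y 0 = 1"
  by (simp add: mgf_def prob_space)

lemma mgf_strict_mono:
  assumes "t1 < t2" "integrable M (\<lambda>x. exp (t1 * Y x))" "integrable M (\<lambda>x. exp (t2 * Y x))"
  shows "mgf M Y t1 < mgf M Y t2"
  unfolding mgf_def using assms Y_pos
  by (intro integral_less_AE_space) (auto simp: emeasure_space_1)

lemma mgf_gt_1: "0 < t \<Longrightarrow> integrable M (\<lambda>x. exp (t * Y x)) \<Longrightarrow> 1 < mgf M Y t"
  using mgf_strict_mono[of 0 t] integrable_exp_nonpos[of 0] by simp

lemma mgf_ge_1: "0 \<le> t \<Longrightarrow> integrable M (\<lambda>x. exp (t * Y x)) \<Longrightarrow> 1 \<le> mgf M Y t"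
  using mgf_gt_1[of t] by (cases "t = 0") auto

text \<open>A non-integrable exponential has integral 0, so values in \<open>]0, 1]\<close> are only attained on the
  nonpositive half-line.\<close>
lemma mgf_nonpos_if_le_1:
  assumes "0 < mgf M Y t" "mgf M Y t \<le> 1"
  shows "t \<le> 0"
  using assms mgf_gt_1[of t] not_integrable_integral_eq[of M "\<lambda>x. exp (t * Y x)"]
  by (force simp: mgf_def)

lemma strict_mono_on_mgf: "strict_mono_on {..0} (mgf M Y)"
  by (auto intro!: strict_mono_onI mgf_strict_mono integrable_exp_nonpos)

lemma continuous_on_mgf: "continuous_on {..0} (mgf M Y)"
  unfolding continuous_on_def mgf_def
proof
  fix t0 :: real assume "t0 \<in> {..0}"
  show "((\<lambda>t. \<integral>x. exp (t * Y x) \<partial>M) \<longlongrightarrow> (\<integral>x. exp (t0 * Y x) \<partial>M)) (at t0 within {..0})"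
  proof (rule integral_dominated_convergence_at_within[where w="\<lambda>_. 1"])
    show "\<forall>\<^sub>F t in at t0 within {..0}. AE x in M. norm (exp (t * Y x)) \<le> 1"
      unfolding eventually_at_filter
      by (intro always_eventually allI impI AE_I2) (auto simp: mult_nonpos_nonneg Y_nonneg)
    show "AE x in M. ((\<lambda>t. exp (t * Y x)) \<longlongrightarrow> exp (t0 * Y x)) (at t0 within {..0})"
      by (intro AE_I2 tendsto_intros)
  qed auto
qed

lemma mgf_tendsto_0_at_bot: "(mgf M Y \<longlongrightarrow> 0) at_bot"
proof -
  have "((\<lambda>t. \<integral>x. exp (- t * Y x) \<partial>M) \<longlongrightarrow> (\<integral>x. 0 \<partial>M)) at_top"
  proof (rule integral_dominated_convergence_at_top[where w="\<lambda>_. 1"])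
    show "AE x in M. ((\<lambda>t. exp (- t * Y x)) \<longlongrightarrow> 0) at_top"
    proof (rule AE_I2)
      fix x assume "x \<in> space M"
      then have "filterlim (\<lambda>t. t * Y x) at_top at_top"
        by (intro filterlim_at_top_mult_tendsto_pos[OF tendsto_const _ filterlim_ident]) (auto simp: Y_pos)
      then show "((\<lambda>t. exp (- t * Y x)) \<longlongrightarrow> 0) at_top"
        by (auto intro: filterlim_compose[OF exp_at_bot] simp: filterlim_uminus_at_bot)
    qed
    show "\<forall>\<^sub>F t in at_top. AE x in M. norm (exp (- t * Y x)) \<le> 1"
      using eventually_ge_at_top[of 0]
      by eventually_elim (auto simp: Y_nonneg)
  qed auto
  then show ?thesis
    by (simp add: filterlim_at_bot_mirror mgf_def)
qed

lemma ex1_mgf_eq: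
  assumes "0 < y" "y \<le> 1"
  shows "\<exists>!t. mgf M Y t = y"
proof -
  obtain a where "a \<le> 0" "mgf M Y a < y"
    using eventually_conj[OF order_tendstoD(2)[OF mgf_tendsto_0_at_bot \<open>0 < y\<close>] eventually_le_at_bot]
    unfolding eventually_at_bot_linorder by (meson order_refl)
  then obtain t where "mgf M Y t = y"
    using IVT'[of "mgf M Y" a y 0] continuous_on_subset[OF continuous_on_mgf] assms by auto
  moreover have "t' = t" if "mgf M Y t' = y" "mgf M Y t = y" for t t'
    using that assms mgf_nonpos_if_le_1[of t] mgf_nonpos_if_le_1[of t']
      strict_mono_on_eqD[OF strict_mono_on_mgf] by auto
  ultimately show ?thesis
    by blast
qed

lemma mgf_has_real_derivative:
  assumes "integrable M (\<lambda>x. exp (t0 * Y x))"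
    and "\<And>t. t \<in> S \<Longrightarrow> integrable M (\<lambda>x. exp (t * Y x))"
    and "integrable M w"
    and bound: "\<forall>\<^sub>F t in at t0 within S. \<forall>x\<in>space M. Y x * exp (max t t0 * Y x) \<le> w x"
  shows "(mgf M Y has_real_derivative (\<integral>x. Y x * exp (t0 * Y x) \<partial>M)) (at t0 within S)"
  unfolding has_field_derivative_iff
proof -
  let ?q = "\<lambda>t x. (exp (t * Y x) - exp (t0 * Y x)) / (t - t0)"
  have lim: "((\<lambda>t. \<integral>x. ?q t x \<partial>M) \<longlongrightarrow> (\<integral>x. Y x * exp (t0 * Y x) \<partial>M)) (at t0 within S)"
  proof (rule integral_dominated_convergence_at_within[where w=w])
    show "AE x in M. ((\<lambda>t. ?q t x) \<longlongrightarrow> Y x * exp (t0 * Y x)) (at t0 within S)"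
    proof (rule AE_I2)
      fix x
      have "((\<lambda>t. exp (t * Y x)) has_real_derivative exp (t0 * Y x) * Y x) (at t0 within S)"
        by (auto intro!: derivative_eq_intros)
      then show "((\<lambda>t. ?q t x) \<longlongrightarrow> Y x * exp (t0 * Y x)) (at t0 within S)"
        by (simp add: has_field_derivative_iff mult.commute)
    qed
    show "\<forall>\<^sub>F t in at t0 within S. AE x in M. norm (?q t x) \<le> w x"
      using bound
    proof eventually_elim
      case (elim t)
      show ?case
      proof (rule AE_I2)
        fix x assume "x \<in> space M"
        have "norm (?q t x) \<le> Y x * exp (max t t0 * Y x)"
          using abs_exp_diff_quotient_le[of "Y x" t t0] Y_pos[OF \<open>x \<in> space M\<close>] by simp
        also have "\<dots> \<le> w x"
          using elim \<open>x \<in> space M\<close> by blast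
        finally show "norm (?q t x) \<le> w x" .
      qed
    qed
  qed (use assms in auto)
  have eq: "\<forall>\<^sub>F t in at t0 within S. (\<integral>x. ?q t x \<partial>M) = (mgf M Y t - mgf M Y t0) / (t - t0)"
    unfolding eventually_at_filter
  proof (intro always_eventually allI impI)
    fix t assume "t \<in> S"
    then show "(\<integral>x. ?q t x \<partial>M) = (mgf M Y t - mgf M Y t0) / (t - t0)"
      unfolding mgf_def using assms(1,2) by simp
  qed
  show "((\<lambda>t. (mgf M Y t - mgf M Y t0) / (t - t0)) \<longlongrightarrow> (\<integral>x. Y x * exp (t0 * Y x) \<partial>M))
      (at t0 within S)"
    using tendsto_cong[OF eq] lim by simp
qed

lemma mgf_has_real_derivative_within_domain:
  assumes "integrable M (\<lambda>x. exp (r * Y x))" "integrable M (\<lambda>x. Y x * exp (r * Y x))"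
    and domain: "\<And>s. s \<in> S \<Longrightarrow> integrable M (\<lambda>x. exp (s * Y x))"
  shows "(mgf M Y has_real_derivative (\<integral>x. Y x * exp (r * Y x) \<partial>M)) (at r within S)"
proof (cases "\<exists>s\<in>S. r < s")
  case True
  then obtain s where "s \<in> S" "r < s" by blast
  define s' where "s' = (r + s) / 2"
  have "r < s'" "s' < s"
    using \<open>r < s\<close> by (simp_all add: s'_def)
  show ?thesis
  proof (rule mgf_has_real_derivative[OF assms(1) domain])
    show "integrable M (\<lambda>x. Y x * exp (s' * Y x))"
      using integrable_mult_exp_less[OF domain[OF \<open>s \<in> S\<close>] \<open>s' < s\<close>] .
    show "\<forall>\<^sub>F t in at r within S. \<forall>x\<in>space M. Y x * exp (max t r * Y x) \<le> Y x * exp (s' * Y x)"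
      using order_tendstoD(2)[OF tendsto_ident_at \<open>r < s'\<close>]
    proof eventually_elim
      case (elim t)
      then have "max t r \<le> s'"
        using \<open>r < s'\<close> by simp
      then show ?case
        by (simp add: mult_exp_mult_mono Y_nonneg)
    qed
  qed
next
  case False
  show ?thesis
  proof (rule mgf_has_real_derivative[OF assms(1) domain assms(2)])
    show "\<forall>\<^sub>F t in at r within S. \<forall>x\<in>space M. Y x * exp (max t r * Y x) \<le> Y x * exp (r * Y x)"
      unfolding eventually_at_filter using False
      by (intro always_eventually) (auto simp: mult_exp_mult_mono Y_nonneg not_less)
  qed
qed

lemma integrable_min_const: "integrable M (\<lambda>x. min (Y x) c)"
proof (rule integrable_const_bound[where B="\<bar>c\<bar>"])
  show "AE x in M. norm (min (Y x) c) \<le> \<bar>c\<bar>"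
  proof (rule AE_I2)
    fix x assume "x \<in> space M"
    then show "norm (min (Y x) c) \<le> \<bar>c\<bar>"
      using Y_pos[of x] by (cases "Y x \<le> c") auto
  qed
qed simp

lemma integral_min_unbounded:
  assumes "\<not> integrable M Y"
  shows "\<exists>n. B < (\<integral>x. min (Y x) (real n) \<partial>M)"
proof (rule ccontr)
  assume "\<not> ?thesis"
  then have bounded: "(\<integral>x. min (Y x) (real n) \<partial>M) \<le> B" for n
    by (meson not_le)
  have "incseq (\<lambda>n. \<integral>x. min (Y x) (real n) \<partial>M)"
    by (intro monoI integral_mono integrable_min_const) auto
  with bounded have convergent:
    "(\<lambda>n. \<integral>x. min (Y x) (real n) \<partial>M) \<longlonglongrightarrow> (SUP n. \<integral>x. min (Y x) (real n) \<partial>M)"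
    by (intro LIMSEQ_incseq_SUP bdd_aboveI2[where M=B]) auto
  have "integrable M Y"
  proof (rule integrable_monotone_convergence[OF integrable_min_const _ _ convergent])
    show "AE x in M. mono (\<lambda>n. min (Y x) (real n))"
      by (intro AE_I2 monoI) auto
    show "AE x in M. (\<lambda>n. min (Y x) (real n)) \<longlonglongrightarrow> Y x"
    proof (rule AE_I2)
      fix x
      obtain N :: nat where "Y x \<le> real N"
        using real_arch_simple by blast
      then have "\<forall>\<^sub>F n in sequentially. min (Y x) (real n) = Y x"
        unfolding eventually_sequentially by (intro exI[of _ N]) auto
      then show "(\<lambda>n. min (Y x) (real n)) \<longlonglongrightarrow> Y x"
        by (rule tendsto_eventually)
    qed
  qed simp
  with assms show False
    by simp
qed

lemma mgf_diff_quotient_tendsto_at_top: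
  assumes "\<not> integrable M Y"
  shows "filterlim (\<lambda>t. (mgf M Y t - 1) / t) at_top (at 0 within {..0})"
  unfolding filterlim_at_top
proof
  fix Z :: real
  obtain n where n: "2 * \<bar>Z\<bar> < (\<integral>x. min (Y x) (real n) \<partial>M)"
    using integral_min_unbounded[OF assms] by blast
  have "((\<lambda>t. exp (t * real n)) \<longlongrightarrow> exp (0 * real n)) (at 0 within {..0})"
    by (intro tendsto_intros)
  then have "\<forall>\<^sub>F t in at 0 within {..0}. 1 / 2 < exp (t * real n)"
    by (rule order_tendstoD(1)) simp
  moreover have "\<forall>\<^sub>F t in at (0::real) within {..0}. t < 0"
    unfolding eventually_at_filter by (intro always_eventually) auto
  ultimately show "\<forall>\<^sub>F t in at 0 within {..0}. Z \<le> (mgf M Y t - 1) / t"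
  proof eventually_elim
    case (elim t)
    have "Z \<le> 2 * \<bar>Z\<bar> * (1 / 2)"
      by simp
    also have "\<dots> \<le> (\<integral>x. min (Y x) (real n) \<partial>M) * exp (t * real n)"
      using n elim(1) by (intro mult_mono) auto
    also have "\<dots> = (\<integral>x. min (Y x) (real n) * exp (t * real n) \<partial>M)"
      by simp
    also have "\<dots> \<le> (\<integral>x. (exp (t * Y x) - 1) / t \<partial>M)"
    proof (rule integral_mono)
      show "integrable M (\<lambda>x. min (Y x) (real n) * exp (t * real n))"
        by (simp add: integrable_min_const)
      show "integrable M (\<lambda>x. (exp (t * Y x) - 1) / t)"
        using integrable_exp_nonpos[of t] elim(2) by simp
      fix x assume "x \<in> space M"
      show "min (Y x) (real n) * exp (t * real n) \<le> (exp (t * Y x) - 1) / t"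
        using Y_pos[OF \<open>x \<in> space M\<close>] elim(2) by (intro min_mult_exp_le_exp_diff_quotient) auto
    qed
    also have "\<dots> = (mgf M Y t - 1) / t"
      using integrable_exp_nonpos[of t] elim(2) by (simp add: mgf_def prob_space)
    finally show ?case .
  qed
qed

text \<open>If \<open>Y x * exp (t0 * Y x)\<close> is not integrable then \<open>t0 = 0\<close>, the slope at \<open>0\<close> is infinite, and the
  junk value \<open>inverse 0 = 0\<close> is the correct limit.\<close>
lemma tendsto_inverse_diff_quotient_mgf:
  assumes "t0 \<le> 0"
  shows "((\<lambda>t. (t - t0) / (mgf M Y t - mgf M Y t0)) \<longlongrightarrow> inverse (\<integral>x. Y x * exp (t0 * Y x) \<partial>M))
    (at t0 within {..0})"
proof (cases "integrable M (\<lambda>x. Y x * exp (t0 * Y x))")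
  case True
  have "0 < (\<integral>x. Y x * exp (t0 * Y x) \<partial>M)"
    using integral_less_AE_space[of "\<lambda>_. 0"] True by (simp add: Y_pos emeasure_space_1)
  moreover have "((\<lambda>t. (mgf M Y t - mgf M Y t0) / (t - t0)) \<longlongrightarrow> (\<integral>x. Y x * exp (t0 * Y x) \<partial>M))
      (at t0 within {..0})"
    using mgf_has_real_derivative_within_domain[OF integrable_exp_nonpos[OF assms] True, of "{..0}"]
    by (simp add: has_field_derivative_iff integrable_exp_nonpos)
  ultimately show ?thesis
    using tendsto_inverse[of "\<lambda>t. (mgf M Y t - mgf M Y t0) / (t - t0)"] by simp
next
  case False
  then have "t0 = 0"
    using integrable_mult_exp_less[OF integrable_exp_nonpos[of 0], of t0] assms by force
  with False have "\<not> integrable M Y"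
    by simp
  from tendsto_inverse_0_at_top[OF mgf_diff_quotient_tendsto_at_top[OF this]]
  show ?thesis
    using False \<open>t0 = 0\<close> by (simp add: not_integrable_integral_eq)
qed

end

lemma integral_exp_tilted:
  assumes "Y \<in> borel_measurable Q" "Z \<in> borel_measurable M"
    and tilted: "distr Q borel Y = exp_tilt (distr M borel Z) a"
  shows "(\<integral>\<omega>. Y \<omega> \<partial>Q) = (\<integral>\<omega>. Z \<omega> * exp (a * Z \<omega>) \<partial>M) / mgf M Z a"
proof -
  have normalizer: "(\<integral>y. exp (a * y) \<partial>distr M borel Z) = mgf M Z a"
    using assms(2) by (simp add: integral_distr mgf_def)
  have "(\<integral>\<omega>. Y \<omega> \<partial>Q) = (\<integral>x. x \<partial>exp_tilt (distr M borel Z) a)"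
    unfolding tilted[symmetric] using assms(1) by (simp add: integral_distr)
  also have "\<dots> = (\<integral>x. exp (a * x) / mgf M Z a * x \<partial>distr M borel Z)"
    unfolding exp_tilt_def normalizer
    by (subst integral_density) (auto simp: mgf_def)
  also have "\<dots> = (\<integral>\<omega>. Z \<omega> * exp (a * Z \<omega>) / mgf M Z a \<partial>M)"
    using assms(2) by (simp add: integral_distr mult.commute)
  finally show ?thesis
    by simp
qed

lemma mgf_kappa:
  assumes "positive_random_variable P X" "positive_random_variable Q W"
    and "0 \<le> s" "integrable P (\<lambda>\<omega>. exp (s * X \<omega>))"
  shows "mgf Q W (- kappa P Q X W c s - c * s) = inverse (mgf P X s)"
proof -
  interpret X: positive_random_variable P X by fact
  interpret W: positive_random_variable Q W by fact
  have G: "1 \<le> mgf P X s"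
    using X.mgf_ge_1 assms(3,4) .
  then have "0 < inverse (mgf P X s)" "inverse (mgf P X s) \<le> 1"
    by (simp_all add: inverse_le_1_iff)
  then obtain t where t: "mgf Q W t = inverse (mgf P X s)"
    and unique: "\<And>t'. mgf Q W t' = inverse (mgf P X s) \<Longrightarrow> t' = t"
    using W.ex1_mgf_eq by metis
  have "\<exists>!k. mgf P X s * mgf Q W (- k - c * s) = 1"
  proof (rule ex1I[of _ "- t - c * s"])
    show "mgf P X s * mgf Q W (- (- t - c * s) - c * s) = 1"
      using t G by simp
    fix k assume "mgf P X s * mgf Q W (- k - c * s) = 1"
    then have "mgf Q W (- k - c * s) = inverse (mgf P X s)"
      using G by (simp add: field_simps)
    then have "- k - c * s = t"
      by (rule unique)
    then show "k = - t - c * s"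
      by simp
  qed
  then have "mgf P X s * mgf Q W (- kappa P Q X W c s - c * s) = 1"
    unfolding kappa_def by (rule theI')
  then show ?thesis
    using G by (simp add: field_simps)
qed

lemma kappa_has_real_derivative:
  fixes c r :: real
  assumes X: "positive_random_variable P X" and W: "positive_random_variable Q W"
    and r: "0 \<le> r" "integrable P (\<lambda>\<omega>. exp (r * X \<omega>))" "integrable P (\<lambda>\<omega>. X \<omega> * exp (r * X \<omega>))"
  defines "t \<equiv> - kappa P Q X W c r - c * r"
  shows "((\<lambda>s. kappa P Q X W c s) has_real_derivative
      (\<integral>\<omega>. X \<omega> * exp (r * X \<omega>) \<partial>P) / mgf P X r / ((\<integral>\<omega>. W \<omega> * exp (t * W \<omega>) \<partial>Q) * mgf P X r) - c)
    (at r within {s. 0 \<le> s \<and> integrable P (\<lambda>\<omega>. exp (s * X \<omega>))})"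
proof -
  interpret X: positive_random_variable P X by fact
  interpret W: positive_random_variable Q W by fact
  define I where "I = {s. 0 \<le> s \<and> integrable P (\<lambda>\<omega>. exp (s * X \<omega>))}"
  define u where "u s = - kappa P Q X W c s - c * s" for s
  define G' where "G' = (\<integral>\<omega>. X \<omega> * exp (r * X \<omega>) \<partial>P)"
  define E where "E = (\<integral>\<omega>. W \<omega> * exp (t * W \<omega>) \<partial>Q)"
  have "r \<in> I"
    using r by (simp add: I_def)
  have G_ge_1: "1 \<le> mgf P X s" if "s \<in> I" for s
    using that X.mgf_ge_1 by (simp add: I_def)
  have u_eq: "mgf Q W (u s) = inverse (mgf P X s)" if "s \<in> I" for s
    using mgf_kappa[OF X W] that by (simp add: I_def u_def)
  have u_nonpos: "u s \<le> 0" if "s \<in> I" for s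
    using W.mgf_nonpos_if_le_1 u_eq[OF that] G_ge_1[OF that] by (simp add: inverse_le_1_iff)
  have G_deriv: "(mgf P X has_real_derivative G') (at r within I)"
    unfolding G'_def using r by (intro X.mgf_has_real_derivative_within_domain) (auto simp: I_def)
  have v_deriv: "((\<lambda>s. inverse (mgf P X s)) has_real_derivative - (G' * inverse (mgf P X r ^ 2)))
      (at r within I)"
    using DERIV_inverse_fun[OF G_deriv] G_ge_1[OF \<open>r \<in> I\<close>] by (simp add: numeral_2_eq_2)
  have v_inj: "inverse (mgf P X s) \<noteq> inverse (mgf P X r)" if "s \<in> I" "s \<noteq> r" for s
    using X.mgf_strict_mono[of s r] X.mgf_strict_mono[of r s] that \<open>r \<in> I\<close>
    by (auto simp: I_def neq_iff)
  have v_cont: "((\<lambda>s. inverse (mgf P X s)) \<longlongrightarrow> inverse (mgf P X r)) (at r within I)"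
    using DERIV_continuous[OF v_deriv] by (simp add: continuous_within)
  have u_cont: "(u \<longlongrightarrow> u r) (at r within I)"
    by (rule tendsto_of_strict_mono_on_comp[OF W.strict_mono_on_mgf u_nonpos u_eq v_cont \<open>r \<in> I\<close>])
  have u_deriv: "(u has_real_derivative - (G' * inverse (mgf P X r ^ 2)) * inverse E) (at r within I)"
  proof (rule has_real_derivative_implicit[OF u_eq _ v_inj u_cont _ v_deriv \<open>r \<in> I\<close>])
    show "u s \<in> {..0}" if "s \<in> I" for s
      using u_nonpos[OF that] by simp
    show "((\<lambda>y. (y - u r) / (mgf Q W y - mgf Q W (u r))) \<longlongrightarrow> inverse E) (at (u r) within {..0})"
      using W.tendsto_inverse_diff_quotient_mgf[OF u_nonpos[OF \<open>r \<in> I\<close>]]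
      by (simp add: E_def t_def u_def)
  qed
  have "((\<lambda>s. - u s - c * s) has_real_derivative - (- (G' * inverse (mgf P X r ^ 2)) * inverse E) - c * 1)
      (at r within I)"
    by (intro DERIV_diff DERIV_minus DERIV_cmult DERIV_ident u_deriv)
  moreover have "- (- (G' * inverse (mgf P X r ^ 2)) * inverse E) - c * 1
      = G' / mgf P X r / (E * mgf P X r) - c"
    by (simp add: divide_inverse power2_eq_square mult_ac)
  ultimately show ?thesis
    by (simp add: u_def G'_def E_def I_def)
qed

theorem lemma3p6:
  fixes P :: "'a measure"
    and \<Theta> :: "'a \<Rightarrow> real ^ 'd"
    and D :: "(real ^ 'd) set"
    and W X :: "nat \<Rightarrow> 'a \<Rightarrow> real"
    and K :: "real ^ 'd \<Rightarrow> real measure"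
    and c :: "real ^ 'd \<Rightarrow> real"
    and \<xi> :: "real ^ 'd \<Rightarrow> real"
    and P\<theta> Q\<theta> :: "real ^ 'd \<Rightarrow> 'a measure"
    and L :: "(real ^ 'd) set"
    and r :: real
  assumes P: "prob_space P"
    and D: "D \<in> sets borel"
    and Theta_meas: "\<Theta> \<in> borel_measurable P" and Theta_D: "\<And>\<omega>. \<Theta> \<omega> \<in> D"
    and W_meas: "\<And>n. W n \<in> borel_measurable P" and W_pos: "\<And>n \<omega>. W n \<omega> > 0"
    and X_meas: "\<And>n. X n \<in> borel_measurable P" and X_pos: "\<And>n \<omega>. X n \<omega> > 0"
    and c_meas: "c \<in> borel_measurable borel" and c_pos: "\<And>\<theta>. \<theta> \<in> D \<Longrightarrow> c \<theta> > 0"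
    and xi_meas: "\<xi> \<in> borel_measurable borel"
    and xi_pos: "AE \<theta> in distr P borel \<Theta>. \<xi> \<theta> > 0"
    and xi_int: "(\<integral>\<omega>. \<xi> (\<Theta> \<omega>) \<partial>P) = 1"
    and r_nonneg: "r \<ge> 0"
    and r_mgf: "integrable P (\<lambda>\<omega>. exp (r * X 1 \<omega>))"
    and r_mean: "integrable P (\<lambda>\<omega>. X 1 \<omega> * exp (r * X 1 \<omega>))"
    and L_borel: "L \<in> sets borel"
    and L_null: "L \<in> null_sets (distr P borel \<Theta>)"
    and P\<theta>_prob: "\<And>\<theta>. \<theta> \<in> D - L \<Longrightarrow> prob_space (P\<theta> \<theta>) \<and> sets (P\<theta> \<theta>) = sets P"
    and Q\<theta>_prob: "\<And>\<theta>. \<theta> \<in> D - L \<Longrightarrow> prob_space (Q\<theta> \<theta>) \<and> sets (Q\<theta> \<theta>) = sets P"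
    and P\<theta>_W: "\<And>\<theta>. \<theta> \<in> D - L \<Longrightarrow> distr (P\<theta> \<theta>) borel (W 1) = K \<theta>"
    and P\<theta>_X: "\<And>\<theta>. \<theta> \<in> D - L \<Longrightarrow> distr (P\<theta> \<theta>) borel (X 1) = distr P borel (X 1)"
    and Q\<theta>_W: "\<And>\<theta>. \<theta> \<in> D - L \<Longrightarrow>
        distr (Q\<theta> \<theta>) borel (W 1) =
          exp_tilt (K \<theta>) (- (kappa P (P\<theta> \<theta>) (X 1) (W 1) (c \<theta>) r + c \<theta> * r))"
    and Q\<theta>_X: "\<And>\<theta>. \<theta> \<in> D - L \<Longrightarrow>
        distr (Q\<theta> \<theta>) borel (X 1) = exp_tilt (distr P borel (X 1)) r"
  shows "\<forall>\<theta> \<in> D - L.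
    ((\<lambda>s. kappa P (P\<theta> \<theta>) (X 1) (W 1) (c \<theta>) s) has_real_derivative
        ((\<integral>\<omega>. X 1 \<omega> \<partial>Q\<theta> \<theta>) / (\<integral>\<omega>. W 1 \<omega> \<partial>Q\<theta> \<theta>) - c \<theta>))
      (at r within {s. 0 \<le> s \<and> integrable P (\<lambda>\<omega>. exp (s * X 1 \<omega>))})"
proof (intro ballI)
  fix \<theta> assume \<theta>: "\<theta> \<in> D - L"
  have P\<theta>: "prob_space (P\<theta> \<theta>)" "sets (P\<theta> \<theta>) = sets P" and Q\<theta>: "sets (Q\<theta> \<theta>) = sets P"
    using P\<theta>_prob[OF \<theta>] Q\<theta>_prob[OF \<theta>] by auto
  have meas_P\<theta>: "borel_measurable (P\<theta> \<theta>) = borel_measurable P"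
    by (rule measurable_cong_sets[OF P\<theta>(2) refl])
  have meas_Q\<theta>: "borel_measurable (Q\<theta> \<theta>) = borel_measurable P"
    by (rule measurable_cong_sets[OF Q\<theta> refl])
  have X: "positive_random_variable P (X 1)"
    using P X_meas X_pos by (simp add: positive_random_variable_def positive_random_variable_axioms_def)
  have W: "positive_random_variable (P\<theta> \<theta>) (W 1)"
    using P\<theta>(1) W_meas W_pos
    by (simp add: positive_random_variable_def positive_random_variable_axioms_def meas_P\<theta>)
  let ?t = "- kappa P (P\<theta> \<theta>) (X 1) (W 1) (c \<theta>) r - c \<theta> * r"
  have "(\<integral>\<omega>. X 1 \<omega> \<partial>Q\<theta> \<theta>) = (\<integral>\<omega>. X 1 \<omega> * exp (r * X 1 \<omega>) \<partial>P) / mgf P (X 1) r"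
    using X_meas by (intro integral_exp_tilted[OF _ _ Q\<theta>_X[OF \<theta>]]) (simp_all add: meas_Q\<theta>)
  moreover have "(\<integral>\<omega>. W 1 \<omega> \<partial>Q\<theta> \<theta>) = (\<integral>\<omega>. W 1 \<omega> * exp (?t * W 1 \<omega>) \<partial>P\<theta> \<theta>) * mgf P (X 1) r"
  proof -
    have "distr (Q\<theta> \<theta>) borel (W 1) = exp_tilt (distr (P\<theta> \<theta>) borel (W 1)) ?t"
      using Q\<theta>_W[OF \<theta>] P\<theta>_W[OF \<theta>] by simp
    then have "(\<integral>\<omega>. W 1 \<omega> \<partial>Q\<theta> \<theta>) = (\<integral>\<omega>. W 1 \<omega> * exp (?t * W 1 \<omega>) \<partial>P\<theta> \<theta>) / mgf (P\<theta> \<theta>) (W 1) ?t"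
      using W_meas by (intro integral_exp_tilted) (simp_all add: meas_P\<theta> meas_Q\<theta>)
    then show ?thesis
      using mgf_kappa[OF X W r_nonneg r_mgf] by (simp add: divide_inverse)
  qed
  ultimately show "((\<lambda>s. kappa P (P\<theta> \<theta>) (X 1) (W 1) (c \<theta>) s) has_real_derivative
        ((\<integral>\<omega>. X 1 \<omega> \<partial>Q\<theta> \<theta>) / (\<integral>\<omega>. W 1 \<omega> \<partial>Q\<theta> \<theta>) - c \<theta>))
      (at r within {s. 0 \<le> s \<and> integrable P (\<lambda>\<omega>. exp (s * X 1 \<omega>))})"
    using kappa_has_real_derivative[OF X W r_nonneg r_mgf r_mean] by simp
qed

end
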